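(* Let $\zeta_5=e^{2\pi i/5}$. For every $\tau\in\mathbb{H}^2$, $$\zeta_5\,\theta[\tfrac15;\tfrac15]^5+\zeta_5^3\,\theta[\tfrac35;\tfrac15]^5+\theta[1;\tfrac15]^5-\zeta_5^2\,\theta[\tfrac35;\tfrac95]^5-\zeta_5^4\,\theta[\tfrac15;\tfrac95]^5=0,$$ and $$\zeta_5^3\,\theta[\tfrac15;\tfrac35]^5+\zeta_5^4\,\theta[\tfrac35;\tfrac35]^5+\theta[1;\tfrac35]^5-\zeta_5\,\theta[\tfrac35;\tfrac75]^5-\zeta_5^2\,\theta[\tfrac15;\tfrac75]^5=0.$$
   Context: Let $\mathbb{H}^2=\{\tau\in\mathbb{C}:\Im\tau>0\}$. For a characteristic $(\epsilon,\epsilon')\in\mathbb{R}^2$, the theta function with characteristic is $$\theta[\epsilon;\epsilon'](\zeta,\tau)=\sum_{n\in\mathbb{Z}}\exp\Big(2\pi i\Big[\tfrac12\big(n+\tfrac{\epsilon}{2}\big)^2\tau+\big(n+\tfrac{\epsilon}{2}\big)\big(\zeta+\tfrac{\epsilon'}{2}\big)\Big]\Big),\quad (\zeta,\tau)\in\mathbb{C}\times\mathbb{H}^2,$$ (usually written with the column $\left[\begin{smallmatrix}\epsilon\\ \epsilon'\end{smallmatrix}\right]$), and the theta constant is $\theta[\epsilon;\epsilon']=\theta[\epsilon;\epsilon'](0,\tau)$, regarded as a function of $\tau$. *)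

theory Defs
  imports "HOL-Analysis.Analysis"
begin

text \<open>Theta function with characteristic (eps, eps'), as a sum over all integers n
  (absolutely convergent for Im tau > 0, so the unordered sum infsum is appropriate).\<close>
definition theta_char :: "real \<Rightarrow> real \<Rightarrow> complex \<Rightarrow> complex \<Rightarrow> complex" where
  "theta_char eps eps' z tau =
     (\<Sum>\<^sub>\<infinity> n\<in>(UNIV::int set).
        exp (2 * pi * \<i> * ((1/2) * (of_int n + of_real (eps/2))^2 * tau
                           + (of_int n + of_real (eps/2)) * (z + of_real (eps'/2)))))"

definition theta_const :: "real \<Rightarrow> real \<Rightarrow> complex \<Rightarrow> complex" where
  "theta_const eps eps' tau = theta_char eps eps' 0 tau"

definition zeta5 :: complex where
  "zeta5 = exp (2 * pi * \<i> / 5)"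

end

(* The left-hand side of each identity is a single sum over the integer 5-tuples x whose
   coordinates are odd and pairwise congruent mod 10. Writing x_i = 10 n_i + r, the tuples with
   residue r = 1, 3, 5 give the terms theta[r/5; j/5]^5, those with residue r = 9, 7 give the terms
   theta[(10-r)/5; 2 - j/5]^5, and the phase zeta5^(j x_0) supplies the roots of unity. On this set
   x \<mapsto> x - 2K(1,...,1), where sum x = 5K with K odd, is an involution that preserves sum x^2 and
   multiplies the summand by exp (- pi i j K) = -1 for odd j, so the sum vanishes. *)

theory Submission
  imports Defs
begin

lemma bij_betw_residue_class:
  fixes m r :: int
  assumes "0 \<le> r" "r < m"
  shows "bij_betw (\<lambda>n. m * n + r) UNIV {x. x mod m = r}"
  by (rule bij_betw_byWitness[where f' = "\<lambda>x. x div m"])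
     (use assms in \<open>auto simp: mult.commute[of m] minus_mod_eq_mult_div[symmetric]\<close>)

lemma summable_on_int_geometric:
  fixes r :: real
  assumes "0 \<le> r" "r < 1"
  shows "(\<lambda>n::int. r ^ nat \<bar>n\<bar>) summable_on UNIV"
proof -
  have geom: "(\<lambda>n::nat. r ^ n) summable_on UNIV"
    using assms by (intro summable_nonneg_imp_summable_on summable_geometric) auto
  have "(\<lambda>n::int. r ^ nat \<bar>n\<bar>) summable_on range int"
    using geom by (subst summable_on_reindex) (auto simp: o_def)
  moreover have "(\<lambda>n::int. r ^ nat \<bar>n\<bar>) summable_on range (\<lambda>n. - int n)"
    using geom by (subst summable_on_reindex) (auto simp: o_def inj_on_def)
  moreover have "UNIV = range int \<union> range (\<lambda>n. - int n)"
    by (auto simp: image_iff) (metis nonneg_int_cases minus_minus neg_0_le_iff_le nle_le)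
  ultimately show ?thesis
    by (metis summable_on_union)
qed

lemma summable_on_int_gaussian:
  fixes c :: real
  assumes "c > 0"
  shows "(\<lambda>n::int. exp (- c * of_int n ^ 2)) summable_on UNIV"
  using summable_on_int_geometric[of "exp (- c)"]
proof (rule summable_on_comparison_test)
  fix n :: int
  have "\<bar>n\<bar> \<le> n ^ 2"
    using le_square[of "nat \<bar>n\<bar>"]
    by (simp add: power2_eq_square abs_mult[symmetric] nat_mult_distrib[symmetric] nat_le_eq_zle)
  then have "- c * of_int n ^ 2 \<le> - c * of_int \<bar>n\<bar>"
    using assms by (intro mult_left_mono_neg) (simp_all flip: of_int_abs of_int_power)
  then show "exp (- c * of_int n ^ 2) \<le> exp (- c) ^ nat \<bar>n\<bar>"
    by (simp add: exp_of_nat_mult[symmetric] mult_ac)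
qed (use assms in auto)

(* The summand of theta[r/5; j/5] in the variable x = 10 n + r, in which it no longer depends on r. *)
definition gauss_term :: "int \<Rightarrow> complex \<Rightarrow> int \<Rightarrow> complex" where
  "gauss_term j \<tau> x = exp (pi * \<i> * (\<tau> * of_int x ^ 2 / 100 + of_int j * of_int x / 50))"

lemma norm_gauss_term: "norm (gauss_term j \<tau> x) = exp (- (pi * Im \<tau> / 100) * of_int x ^ 2)"
  by (simp add: gauss_term_def)

lemma abs_summable_gauss_term:
  assumes "Im \<tau> > 0"
  shows "(\<lambda>x. norm (gauss_term j \<tau> x)) summable_on UNIV"
  unfolding norm_gauss_term by (rule summable_on_int_gaussian) (use assms in simp)

lemma gauss_term_uminus: "gauss_term j \<tau> (- x) = gauss_term (- j) \<tau> x"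
  by (simp add: gauss_term_def)

lemma theta_const_eq_infsum_gauss_term:
  assumes "0 \<le> \<rho>" "\<rho> < 10"
  shows "theta_const (of_int \<rho> / 5) (of_int j / 5) \<tau> = (\<Sum>\<^sub>\<infinity>x\<in>{x. x mod 10 = \<rho>}. gauss_term j \<tau> x)"
proof -
  have "theta_const (of_int \<rho> / 5) (of_int j / 5) \<tau> = (\<Sum>\<^sub>\<infinity>n. gauss_term j \<tau> (10 * n + \<rho>))"
    unfolding theta_const_def theta_char_def gauss_term_def
    by (intro infsum_cong arg_cong[where f = exp]) (simp add: field_simps power2_eq_square)
  also have "\<dots> = (\<Sum>\<^sub>\<infinity>x\<in>{x. x mod 10 = \<rho>}. gauss_term j \<tau> x)"
    using bij_betw_residue_class[of \<rho> 10] assms by (intro infsum_reindex_bij_betw) auto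
  finally show ?thesis .
qed

lemma theta_const_char_shift: "theta_const e (e' + 2) \<tau> = exp (\<i> * of_real (pi * e)) * theta_const e e' \<tau>"
proof -
  have "exp (2 * pi * \<i> * (A + (of_int n + of_real (e / 2)) * (0 + of_real ((e' + 2) / 2))))
      = exp (\<i> * of_real (pi * e)) * exp (2 * pi * \<i> * (A + (of_int n + of_real (e / 2)) * (0 + of_real (e' / 2))))"
    for A n
    unfolding exp_add[symmetric] exp_eq by (intro exI[of _ n]) (simp add: field_simps)
  then show ?thesis
    unfolding theta_const_def theta_char_def by (simp add: infsum_cmult_right')
qed

lemma infsum_residue_class_uminus:
  fixes f :: "int \<Rightarrow> 'a::{comm_monoid_add,t2_space}"
  assumes "0 \<le> r" "r < m"
  shows "(\<Sum>\<^sub>\<infinity>x\<in>{x. x mod m = r}. f (- x)) = (\<Sum>\<^sub>\<infinity>x\<in>{x. x mod m = (- r) mod m}. f x)"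
proof (rule infsum_reindex_bij_witness[of _ uminus uminus])
  fix x :: int assume "x \<in> {x. x mod m = (- r) mod m}"
  then have "(- x) mod m = (- ((- r) mod m)) mod m" by (intro mod_minus_cong) simp
  then show "- x \<in> {x. x mod m = r}" using assms by (simp add: mod_minus_eq)
qed (auto intro: mod_minus_cong)

lemma theta_const_reflected_eq_infsum_gauss_term:
  assumes "0 \<le> \<rho>" "\<rho> < 10"
  shows "theta_const (of_int \<rho> / 5) (2 - of_int j / 5) \<tau>
           = exp (\<i> * of_real (pi * of_int \<rho> / 5)) * (\<Sum>\<^sub>\<infinity>x\<in>{x. x mod 10 = (- \<rho>) mod 10}. gauss_term j \<tau> x)"
proof -
  have "theta_const (of_int \<rho> / 5) (2 - of_int j / 5) \<tau>
          = exp (\<i> * of_real (pi * of_int \<rho> / 5)) * theta_const (of_int \<rho> / 5) (of_int (- j) / 5) \<tau>"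
    using theta_const_char_shift[of "of_int \<rho> / 5" "of_int (- j) / 5" \<tau>] by (simp add: add.commute)
  also have "theta_const (of_int \<rho> / 5) (of_int (- j) / 5) \<tau> = (\<Sum>\<^sub>\<infinity>x\<in>{x. x mod 10 = \<rho>}. gauss_term j \<tau> (- x))"
    unfolding gauss_term_uminus by (rule theta_const_eq_infsum_gauss_term) (use assms in auto)
  also have "\<dots> = (\<Sum>\<^sub>\<infinity>x\<in>{x. x mod 10 = (- \<rho>) mod 10}. gauss_term j \<tau> x)"
    by (rule infsum_residue_class_uminus) (use assms in auto)
  finally show ?thesis .
qed

definition lattice_term :: "int \<Rightarrow> complex \<Rightarrow> (nat \<Rightarrow> int) \<Rightarrow> complex" where
  "lattice_term j \<tau> x = exp (2 * pi * \<i> * of_int (j * x 0) / 5) * (\<Prod>i<5. gauss_term j \<tau> (x i))"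

definition residue_box :: "int \<Rightarrow> (nat \<Rightarrow> int) set" where
  "residue_box r = PiE {..<5} (\<lambda>_. {x. x mod 10 = r})"

lemma residue_boxD: "x \<in> residue_box r \<Longrightarrow> i < 5 \<Longrightarrow> x i mod 10 = r"
  unfolding residue_box_def by (drule PiE_mem[of _ _ _ i]) auto

lemma residue_box_disjoint: "r \<noteq> r' \<Longrightarrow> residue_box r \<inter> residue_box r' = {}"
  using residue_boxD[of _ _ 0, simplified] by blast

lemma summable_on_lattice_term:
  assumes "Im \<tau> > 0"
  shows "lattice_term j \<tau> summable_on PiE {..<5} (\<lambda>_. UNIV)"
proof -
  have "(\<lambda>x. norm (\<Prod>i<5::nat. gauss_term j \<tau> (x i))) summable_on PiE {..<5} (\<lambda>_. UNIV)"
    using abs_summable_gauss_term[OF assms]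
    by (intro abs_summable_equivalent[THEN iffD2] abs_summable_on_prod_PiE)
       (auto simp: abs_summable_equivalent[symmetric])
  then have "(\<lambda>x. norm (lattice_term j \<tau> x)) summable_on PiE {..<5} (\<lambda>_. UNIV)"
    by (simp add: lattice_term_def norm_mult)
  then show ?thesis
    by (rule abs_summable_summable)
qed

lemma exp_2pi_div5_cong:
  assumes "x mod 5 = y mod 5"
  shows "exp (2 * pi * \<i> * of_int x / 5) = exp (2 * pi * \<i> * of_int y / 5)"
proof -
  obtain d where "y = x + 5 * d"
    using assms by (rule mod_eqE)
  then show ?thesis
    unfolding exp_eq by (intro exI[of _ "- d"]) (simp add: field_simps)
qed

lemma infsum_lattice_term_residue_box:
  assumes "Im \<tau> > 0"
  shows "infsum (lattice_term j \<tau>) (residue_box r)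
           = exp (2 * pi * \<i> * of_int (j * r) / 5) * (\<Sum>\<^sub>\<infinity>x\<in>{x. x mod 10 = r}. gauss_term j \<tau> x) ^ 5"
proof -
  have phase: "exp (2 * pi * \<i> * of_int (j * x 0) / 5) = exp (2 * pi * \<i> * of_int (j * r) / 5)"
    if "x \<in> residue_box r" for x
  proof (rule exp_2pi_div5_cong)
    have "x 0 mod 10 = r"
      using that by (rule residue_boxD) simp
    then have "x 0 mod 5 = r mod 5"
      using mod_mod_cancel[of 5 10 "x 0"] by simp
    then show "(j * x 0) mod 5 = (j * r) mod 5"
      by (intro mod_mult_cong) simp_all
  qed
  have "infsum (lattice_term j \<tau>) (residue_box r)
          = (\<Sum>\<^sub>\<infinity>x\<in>residue_box r. exp (2 * pi * \<i> * of_int (j * r) / 5) * (\<Prod>i<5. gauss_term j \<tau> (x i)))"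
    by (rule infsum_cong) (simp only: lattice_term_def phase)
  also have "\<dots> = exp (2 * pi * \<i> * of_int (j * r) / 5) * (\<Prod>i<5::nat. \<Sum>\<^sub>\<infinity>x\<in>{x. x mod 10 = r}. gauss_term j \<tau> x)"
    unfolding residue_box_def infsum_cmult_right'
    using summable_on_subset_banach[OF abs_summable_gauss_term[OF assms]]
    by (subst infsum_prod_PiE_abs) auto
  finally show ?thesis
    by simp
qed

definition odd_lattice :: "(nat \<Rightarrow> int) set" where
  "odd_lattice = (\<Union>r\<in>{1,3,5,7,9}. residue_box r)"

definition lattice_reflection :: "(nat \<Rightarrow> int) \<Rightarrow> nat \<Rightarrow> int" where
  "lattice_reflection x = restrict (\<lambda>i. x i - 2 * ((\<Sum>k<5. x k) div 5)) {..<5}"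

lemma mem_odd_lattice_iff:
  "x \<in> odd_lattice \<longleftrightarrow> x \<in> extensional {..<5} \<and> (\<exists>r. odd r \<and> (\<forall>i<5. x i mod 10 = r))"
proof
  assume "x \<in> odd_lattice"
  then obtain r where "r \<in> {1,3,5,7,9}" "x \<in> PiE {..<5} (\<lambda>_. {x. x mod 10 = r})"
    by (auto simp: odd_lattice_def residue_box_def)
  then show "x \<in> extensional {..<5} \<and> (\<exists>r. odd r \<and> (\<forall>i<5. x i mod 10 = r))"
    by (intro conjI exI[of _ r]) (auto simp: PiE_iff)
next
  assume "x \<in> extensional {..<5} \<and> (\<exists>r. odd r \<and> (\<forall>i<5. x i mod 10 = r))"
  then obtain r where x: "x \<in> extensional {..<5}" "odd r" "\<And>i. i < 5 \<Longrightarrow> x i mod 10 = r"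
    by blast
  have "r = x 0 mod 10"
    using x(3)[of 0] by simp
  then have "r \<in> {1,3,5,7,9}"
    using \<open>odd r\<close> unfolding insert_iff empty_iff by presburger
  moreover have "x \<in> residue_box r"
    using x by (simp add: residue_box_def PiE_iff)
  ultimately show "x \<in> odd_lattice"
    by (auto simp: odd_lattice_def)
qed

lemma sum_odd_lattice:
  assumes "x \<in> odd_lattice"
  obtains K where "odd K" "(\<Sum>i<5. x i) = 5 * K"
proof -
  obtain r where "odd r" and r: "\<And>i. i < 5 \<Longrightarrow> x i mod 10 = r"
    using assms by (auto simp: mem_odd_lattice_iff)
  have "(\<Sum>i<5. x i) mod 10 = (\<Sum>i<5. x i mod 10) mod 10"
    by (rule mod_sum_eq[symmetric])
  also have "\<dots> = (5 * r) mod 10"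
    using r by simp
  finally obtain d where "5 * r = (\<Sum>i<5. x i) + 10 * d"
    by (rule mod_eqE)
  then have "(\<Sum>i<5. x i) = 5 * (r - 2 * d)"
    by simp
  moreover have "odd (r - 2 * d)"
    using \<open>odd r\<close> by simp
  ultimately show thesis
    using that by blast
qed

lemma lattice_reflection_apply:
  "(\<Sum>k<5. x k) = 5 * K \<Longrightarrow> i < 5 \<Longrightarrow> lattice_reflection x i = x i - 2 * K"
  by (simp add: lattice_reflection_def)

lemma lattice_reflection_in_odd_lattice:
  assumes "x \<in> odd_lattice"
  shows "lattice_reflection x \<in> odd_lattice"
proof -
  obtain K where S: "(\<Sum>k<5. x k) = 5 * K"
    using assms by (rule sum_odd_lattice)
  obtain r where "odd r" and r: "\<And>i. i < 5 \<Longrightarrow> x i mod 10 = r"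
    using assms by (auto simp: mem_odd_lattice_iff)
  have "lattice_reflection x i mod 10 = (r - 2 * K) mod 10" if "i < 5" for i
  proof -
    have "x i mod 10 = r mod 10"
      using r[OF that] by (metis mod_mod_trivial)
    then have "(x i - 2 * K) mod 10 = (r - 2 * K) mod 10"
      by (rule mod_diff_cong) (rule refl)
    then show ?thesis
      using S that by (simp add: lattice_reflection_apply)
  qed
  moreover have "odd ((r - 2 * K) mod 10)"
    using \<open>odd r\<close> by presburger
  moreover have "lattice_reflection x \<in> extensional {..<5}"
    by (simp add: lattice_reflection_def)
  ultimately show ?thesis
    unfolding mem_odd_lattice_iff by blast
qed

lemma lattice_reflection_involutive:
  assumes "x \<in> odd_lattice"
  shows "lattice_reflection (lattice_reflection x) = x"
proof
  fix i
  obtain K where S: "(\<Sum>k<5. x k) = 5 * K"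
    using assms by (rule sum_odd_lattice)
  have "(\<Sum>k<5. lattice_reflection x k) = (\<Sum>k<5. x k - 2 * K)"
    by (rule sum.cong) (simp_all add: S lattice_reflection_apply)
  then have S': "(\<Sum>k<5. lattice_reflection x k) = 5 * (- K)"
    using S by (simp add: sum_subtractf)
  show "lattice_reflection (lattice_reflection x) i = x i"
  proof (cases "i < 5")
    case True
    then show ?thesis
      using lattice_reflection_apply[OF S' True] lattice_reflection_apply[OF S True] by simp
  next
    case False
    have "x \<in> extensional {..<5}"
      using assms unfolding mem_odd_lattice_iff by blast
    moreover have "lattice_reflection y i = undefined" for y
      using False by (simp add: lattice_reflection_def)
    ultimately show ?thesis
      using extensional_arb[of x "{..<5}" i] False by simp
  qed
qed

lemma lattice_term_eq_exp:
  "lattice_term j \<tau> x = exp (2 * pi * \<i> * of_int (j * x 0) / 5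
     + pi * \<i> * (\<tau> * of_int (\<Sum>i<5. x i ^ 2) / 100 + of_int j * of_int (\<Sum>i<5. x i) / 50))"
  unfolding lattice_term_def gauss_term_def exp_add
  by (simp add: exp_sum[symmetric] sum_distrib_left sum.distrib sum_divide_distrib[symmetric] algebra_simps)

lemma lattice_term_reflection:
  assumes "odd j" "x \<in> odd_lattice"
  shows "lattice_term j \<tau> (lattice_reflection x) = - lattice_term j \<tau> x"
proof -
  obtain K where "odd K" and S: "(\<Sum>k<5. x k) = 5 * K"
    using assms(2) by (rule sum_odd_lattice)
  obtain M where M: "j * K = 2 * M + 1"
    using assms(1) \<open>odd K\<close> by (metis even_mult_iff oddE)
  have S': "(\<Sum>i<5. lattice_reflection x i) = (\<Sum>i<5. x i) - 10 * K"
    using S by (simp add: lattice_reflection_apply sum_subtractf)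
  have "(\<Sum>i<5. lattice_reflection x i ^ 2) = (\<Sum>i<5. x i ^ 2 - 4 * K * x i + 4 * K ^ 2)"
    using S by (intro sum.cong) (simp_all add: lattice_reflection_apply power2_eq_square algebra_simps)
  also have "\<dots> = (\<Sum>i<5. x i ^ 2) - 4 * K * (\<Sum>i<5. x i) + 20 * K ^ 2"
    by (simp add: sum.distrib sum_subtractf sum_distrib_left)
  finally have Q': "(\<Sum>i<5. lattice_reflection x i ^ 2) = (\<Sum>i<5. x i ^ 2)"
    using S by (simp add: power2_eq_square)
  have x0': "lattice_reflection x 0 = x 0 - 2 * K"
    using S by (simp add: lattice_reflection_apply)
  let ?E = "2 * pi * \<i> * of_int (j * x 0) / 5
     + pi * \<i> * (\<tau> * of_int (\<Sum>i<5. x i ^ 2) / 100 + of_int j * of_int (\<Sum>i<5. x i) / 50)"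
  have "lattice_term j \<tau> (lattice_reflection x) = exp (?E - pi * \<i> * of_int (j * K))"
    unfolding lattice_term_eq_exp S' Q' x0' by (rule arg_cong[where f = exp]) (simp add: field_simps)
  also have "\<dots> = exp (?E + pi * \<i>)"
    unfolding exp_eq M by (intro exI[of _ "- M - 1"]) (simp add: field_simps)
  also have "\<dots> = - lattice_term j \<tau> x"
    by (simp add: exp_add lattice_term_eq_exp)
  finally show ?thesis .
qed

lemma infsum_lattice_term_odd_lattice:
  assumes "odd j"
  shows "infsum (lattice_term j \<tau>) odd_lattice = 0"
proof -
  have bij: "bij_betw lattice_reflection odd_lattice odd_lattice"
    by (rule bij_betw_byWitness[where f' = lattice_reflection])
       (auto simp: lattice_reflection_in_odd_lattice lattice_reflection_involutive)
  have "infsum (lattice_term j \<tau>) odd_lattice = infsum (\<lambda>x. lattice_term j \<tau> (lattice_reflection x)) odd_lattice"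
    by (rule infsum_reindex_bij_betw[OF bij, symmetric])
  also have "\<dots> = - infsum (lattice_term j \<tau>) odd_lattice"
    using assms by (simp add: lattice_term_reflection infsum_uminus[symmetric] cong: infsum_cong)
  finally show ?thesis
    by simp
qed

lemma exp_2pi_div5_eq_zeta5_power: "exp (2 * pi * \<i> * of_int a / 5) = zeta5 ^ nat (a mod 5)"
proof -
  have "exp (2 * pi * \<i> * of_int a / 5) = exp (2 * pi * \<i> * of_int (a mod 5) / 5)"
    by (rule exp_2pi_div5_cong) simp
  also have "\<dots> = exp (of_nat (nat (a mod 5)) * (2 * pi * \<i> / 5))"
    by (simp add: mult_ac)
  also have "\<dots> = zeta5 ^ nat (a mod 5)"
    unfolding zeta5_def by (rule exp_of_nat_mult)
  finally show ?thesis .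
qed

lemma infsum_lattice_term_residue_box_theta:
  assumes "Im \<tau> > 0" "0 \<le> \<rho>" "\<rho> < 10"
  shows "infsum (lattice_term j \<tau>) (residue_box \<rho>)
           = zeta5 ^ nat ((j * \<rho>) mod 5) * theta_const (of_int \<rho> / 5) (of_int j / 5) \<tau> ^ 5"
  unfolding infsum_lattice_term_residue_box[OF assms(1)] theta_const_eq_infsum_gauss_term[OF assms(2,3)]
    exp_2pi_div5_eq_zeta5_power ..

lemma infsum_lattice_term_reflected_residue_box_theta:
  assumes "Im \<tau> > 0" "odd \<rho>" "0 \<le> \<rho>" "\<rho> < 10"
  shows "infsum (lattice_term j \<tau>) (residue_box ((- \<rho>) mod 10))
           = - (zeta5 ^ nat ((- (j * \<rho>)) mod 5) * theta_const (of_int \<rho> / 5) (2 - of_int j / 5) \<tau> ^ 5)"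
proof -
  let ?c = "exp (\<i> * of_real (pi * of_int \<rho> / 5))"
  let ?S = "\<Sum>\<^sub>\<infinity>x\<in>{x. x mod 10 = (- \<rho>) mod 10}. gauss_term j \<tau> x"
  obtain m where m: "\<rho> = 2 * m + 1"
    using assms(2) by (rule oddE)
  have "?c ^ 5 = exp (\<i> * of_real pi * of_int \<rho>)"
    by (simp add: exp_of_nat_mult[symmetric] mult_ac)
  also have "\<dots> = exp (of_real pi * \<i>)"
    unfolding exp_eq m by (intro exI[of _ m]) (simp add: field_simps)
  finally have c5: "?c ^ 5 = -1"
    by simp
  have "(j * ((- \<rho>) mod 10)) mod 5 = (- (j * \<rho>)) mod 5"
  proof -
    have "((- \<rho>) mod 10) mod 5 = (- \<rho>) mod 5"
      by (rule mod_mod_cancel) simp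
    then have "(j * ((- \<rho>) mod 10)) mod 5 = (j * (- \<rho>)) mod 5"
      by (intro mod_mult_cong) simp_all
    then show ?thesis
      by simp
  qed
  then have "infsum (lattice_term j \<tau>) (residue_box ((- \<rho>) mod 10)) = zeta5 ^ nat ((- (j * \<rho>)) mod 5) * ?S ^ 5"
    unfolding infsum_lattice_term_residue_box[OF assms(1)] exp_2pi_div5_eq_zeta5_power
    by (simp only:)
  moreover have "theta_const (of_int \<rho> / 5) (2 - of_int j / 5) \<tau> ^ 5 = - (?S ^ 5)"
    unfolding theta_const_reflected_eq_infsum_gauss_term[OF assms(3,4)] power_mult_distrib c5 by simp
  ultimately show ?thesis
    by simp
qed

lemma theta_quintic_identity:
  assumes "odd j" "Im \<tau> > 0"
  shows "zeta5 ^ nat (j mod 5) * theta_const (1/5) (of_int j / 5) \<tau> ^ 5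
       + zeta5 ^ nat ((j * 3) mod 5) * theta_const (3/5) (of_int j / 5) \<tau> ^ 5
       + theta_const 1 (of_int j / 5) \<tau> ^ 5
       - zeta5 ^ nat ((- (j * 3)) mod 5) * theta_const (3/5) (2 - of_int j / 5) \<tau> ^ 5
       - zeta5 ^ nat ((- j) mod 5) * theta_const (1/5) (2 - of_int j / 5) \<tau> ^ 5 = 0"
proof -
  have "(\<Sum>r\<in>{1,3,5,7,9}. infsum (lattice_term j \<tau>) (residue_box r)) = infsum (lattice_term j \<tau>) odd_lattice"
    unfolding odd_lattice_def
  proof (rule sum_infsum)
    show "lattice_term j \<tau> summable_on residue_box r" for r
      using summable_on_lattice_term[OF assms(2)]
      by (rule summable_on_subset_banach) (auto simp: residue_box_def intro: PiE_mono)
  qed (auto simp: residue_box_disjoint)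
  also have "\<dots> = 0"
    using assms(1) by (rule infsum_lattice_term_odd_lattice)
  finally show ?thesis
    using infsum_lattice_term_residue_box_theta[OF assms(2), of 1 j] infsum_lattice_term_residue_box_theta[OF assms(2), of 3 j]
      infsum_lattice_term_residue_box_theta[OF assms(2), of 5 j]
      infsum_lattice_term_reflected_residue_box_theta[OF assms(2), of 3 j]
      infsum_lattice_term_reflected_residue_box_theta[OF assms(2), of 1 j]
    by (simp add: algebra_simps)
qed

theorem theorem3p2:
  fixes \<tau> :: complex
  assumes "Im \<tau> > 0"
  shows "zeta5 * theta_const (1/5) (1/5) \<tau> ^ 5 + zeta5 ^ 3 * theta_const (3/5) (1/5) \<tau> ^ 5
           + theta_const 1 (1/5) \<tau> ^ 5 - zeta5 ^ 2 * theta_const (3/5) (9/5) \<tau> ^ 5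
           - zeta5 ^ 4 * theta_const (1/5) (9/5) \<tau> ^ 5 = 0 \<and>
         zeta5 ^ 3 * theta_const (1/5) (3/5) \<tau> ^ 5 + zeta5 ^ 4 * theta_const (3/5) (3/5) \<tau> ^ 5
           + theta_const 1 (3/5) \<tau> ^ 5 - zeta5 * theta_const (3/5) (7/5) \<tau> ^ 5
           - zeta5 ^ 2 * theta_const (1/5) (7/5) \<tau> ^ 5 = 0"
  using theta_quintic_identity[of 1 \<tau>] theta_quintic_identity[of 3 \<tau>] assms by simp

end
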